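(* Let $q \in C^1(\mathbb{R}^n,\mathbb{R})$ be a scalar function such that there exists $m$ with $q(\mathbf{x}) = f(x_m)\cdot \mathbf{x}_{i\neq m}^{\beta}$ for a multi-index $\beta\in\mathbb{N}_0^{n-1}$ and $f$ any function of $x_m$ that can be integrated. Set $\lambda = \left\lceil \frac{|\beta|-1}{2}\right\rceil$ and $W(\mathbf{x}) = \mathcal{A}_{x_m}^{2\lambda+2} q(\mathbf{x}) = \mathbf{x}_{i\neq m}^{\beta}\, \mathcal{A}_{x_m}^{2\lambda+2} f(x_m)$. Then $$Q(\mathbf{x}) := \sum_{p=0}^{\lambda} (-1)^p\, \partial_{x_m}^{2\lambda-2p}\, \Delta_{\setminus m}^{p} W(\mathbf{x}) = \sum_{p=0}^{\lambda} (-1)^p\, \mathcal{A}_{x_m}^{2+2p}\, \Delta_{\setminus m}^{p} q(\mathbf{x})$$ satisfies $\Delta Q = q$, where $\Delta=\sum_{i=1}^n\partial_{x_i}^2$.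
   Context: $\mathbf{x}_{i\neq m}^{\beta}$ denotes $\prod_{i\neq m} x_i^{\beta_i}$ and $|\beta|$ its total degree; $\lceil h\rceil$ is the least integer $\ge h$. The incomplete Laplacian is $\Delta_{\setminus m} f := \sum_{i\neq m}\partial_{x_i}^2 f$, with $\Delta_{\setminus m}^p$ its $p$-fold application. The antiderivative is $\mathcal{A}_{x_j} f(\mathbf{x}) := \int_{x_0}^{x_j} f(x_1,\dots,\xi_j,\dots,x_n)\,d\xi_j$ with freely chosen lower limit $x_0$, and $\mathcal{A}_{x_j}^p := \mathcal{A}_{x_j}^{p-1}\mathcal{A}_{x_j}$ (repeated integration). Zeroth powers of these operators are the identity. *)

theory Defs
  imports "HOL-Analysis.Analysis"
begin

definition vupd :: "real ^ 'n \<Rightarrow> 'n \<Rightarrow> real \<Rightarrow> real ^ 'n" where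
  "vupd x j t = (\<chi> k. if k = j then t else x $ k)"

definition pderiv_at :: "'n \<Rightarrow> (real ^ 'n \<Rightarrow> real) \<Rightarrow> real ^ 'n \<Rightarrow> real" where
  "pderiv_at j g x = deriv (\<lambda>t. g (vupd x j t)) (x $ j)"

definition oint :: "real \<Rightarrow> real \<Rightarrow> (real \<Rightarrow> real) \<Rightarrow> real" where
  "oint a b h = (if a \<le> b then integral {a..b} h else - integral {b..a} h)"

definition antider :: "real \<Rightarrow> 'n \<Rightarrow> (real ^ 'n \<Rightarrow> real) \<Rightarrow> real ^ 'n \<Rightarrow> real" where
  "antider x0 j g x = oint x0 (x $ j) (\<lambda>\<xi>. g (vupd x j \<xi>))"

definition lap_minus :: "'n::finite \<Rightarrow> (real ^ 'n \<Rightarrow> real) \<Rightarrow> real ^ 'n \<Rightarrow> real" where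
  "lap_minus m g x = (\<Sum>i\<in>UNIV - {m}. pderiv_at i (pderiv_at i g) x)"

definition laplacian :: "(real ^ 'n::finite \<Rightarrow> real) \<Rightarrow> real ^ 'n \<Rightarrow> real" where
  "laplacian g x = (\<Sum>i\<in>UNIV. pderiv_at i (pderiv_at i g) x)"

end

theory Submission
  imports Defs
begin

(* Write q = P(x) f(x_m) with P the monomial x^beta in the coordinates other than x_m. Since P
   has degree |beta| < 2 lam + 2, we get lap_minus^(lam+1) P = 0. On products P(x) F(x_m) with P
   polynomial in the other coordinates, antiderivatives and derivatives in x_m act on F alone and
   lap_minus acts on P alone; hence both expressions for Q equal
   sum_p (-1)^p (lap_minus^p P) A^(2p+2) f. In the Laplacian of Q the x_m-part and the
   lap_minus-part then telescope, leaving P f = q. *)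

lemma vupd_nth [simp]: "vupd x i t $ j = (if j = i then t else x $ j)"
  by (simp add: vupd_def)

lemma vupd_same [simp]: "vupd x i (x $ i) = x"
  by (simp add: vupd_def vec_eq_iff)

definition has_pderiv :: "'n \<Rightarrow> (real ^ 'n \<Rightarrow> real) \<Rightarrow> (real ^ 'n \<Rightarrow> real) \<Rightarrow> bool" where
  "has_pderiv i g g' \<longleftrightarrow> (\<forall>x t. ((\<lambda>s. g (vupd x i s)) has_real_derivative g' (vupd x i t)) (at t))"

lemma pderiv_at_eqI:
  assumes "has_pderiv i g g'"
  shows "pderiv_at i g = g'"
proof
  fix x
  have "((\<lambda>s. g (vupd x i s)) has_real_derivative g' (vupd x i (x $ i))) (at (x $ i))"
    using assms unfolding has_pderiv_def by blast
  then show "pderiv_at i g x = g' x"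
    unfolding pderiv_at_def by (simp add: DERIV_imp_deriv)
qed

lemma has_pderiv_imp_differentiable:
  "has_pderiv i g g' \<Longrightarrow> (\<lambda>t. g (vupd x i t)) differentiable (at (x $ i))"
  unfolding has_pderiv_def using real_differentiable_def by blast

lemma has_pderiv_sum:
  "(\<And>p. p \<in> S \<Longrightarrow> has_pderiv i (g p) (g' p)) \<Longrightarrow>
    has_pderiv i (\<lambda>x. \<Sum>p\<in>S. g p x) (\<lambda>x. \<Sum>p\<in>S. g' p x)"
  unfolding has_pderiv_def by (simp add: DERIV_sum)

lemma has_pderiv_mult_indep:
  assumes "has_pderiv i g g'" and "\<And>x s. c (vupd x i s) = c x"
  shows "has_pderiv i (\<lambda>x. g x * c x) (\<lambda>x. g' x * c x)"
  using assms unfolding has_pderiv_def by (simp add: DERIV_cmult_right)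

lemma laplacian_eqI:
  assumes "\<And>i. has_pderiv i g (g1 i)" and "\<And>i. has_pderiv i (g1 i) (g2 i)"
  shows "laplacian g x = (\<Sum>i\<in>UNIV. g2 i x)"
  unfolding laplacian_def using pderiv_at_eqI[OF assms(1)] pderiv_at_eqI[OF assms(2)] by simp

definition monomial_off :: "'n::finite \<Rightarrow> ('n \<Rightarrow> nat) \<Rightarrow> real ^ 'n \<Rightarrow> real" where
  "monomial_off m \<alpha> x = (\<Prod>j\<in>UNIV - {m}. (x $ j) ^ \<alpha> j)"

definition degree_off :: "'n::finite \<Rightarrow> ('n \<Rightarrow> nat) \<Rightarrow> nat" where
  "degree_off m \<alpha> = (\<Sum>j\<in>UNIV - {m}. \<alpha> j)"

(* Polynomials in the coordinates other than x_m of total degree strictly below d, so that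
   poly_off m 0 contains only the zero function. *)
inductive poly_off :: "'n::finite \<Rightarrow> nat \<Rightarrow> (real ^ 'n \<Rightarrow> real) \<Rightarrow> bool" for m where
  poly_off_zero: "poly_off m d (\<lambda>x. 0)"
| poly_off_monomial: "degree_off m \<alpha> < d \<Longrightarrow> poly_off m d (\<lambda>x. c * monomial_off m \<alpha> x)"
| poly_off_add: "poly_off m d P \<Longrightarrow> poly_off m d R \<Longrightarrow> poly_off m d (\<lambda>x. P x + R x)"

lemma poly_off_mono: "poly_off m d P \<Longrightarrow> d \<le> d' \<Longrightarrow> poly_off m d' P"
  by (induction rule: poly_off.induct) (auto intro: poly_off.intros)

lemma poly_off_0_eq_zero: "poly_off m 0 P \<Longrightarrow> P = (\<lambda>x. 0)"
  by (induction "0::nat" P rule: poly_off.induct) auto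

lemma poly_off_sum:
  "finite S \<Longrightarrow> (\<And>p. p \<in> S \<Longrightarrow> poly_off m d (P p)) \<Longrightarrow> poly_off m d (\<lambda>x. \<Sum>p\<in>S. P p x)"
  by (induction S rule: finite_induct) (auto intro: poly_off.intros)

lemma monomial_off_vupd_same [simp]: "monomial_off m \<alpha> (vupd x m t) = monomial_off m \<alpha> x"
  unfolding monomial_off_def by (auto intro!: prod.cong)

lemma poly_off_vupd_same: "poly_off m d P \<Longrightarrow> P (vupd x m t) = P x"
  by (induction rule: poly_off.induct) auto

lemma monomial_off_vupd:
  "i \<noteq> m \<Longrightarrow> monomial_off m \<alpha> (vupd x i s) = s ^ \<alpha> i * (\<Prod>j\<in>UNIV - {m} - {i}. (x $ j) ^ \<alpha> j)"
  unfolding monomial_off_def by (subst prod.remove[of _ i]) (auto intro!: prod.cong)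

lemma monomial_off_has_pderiv:
  fixes m :: "'n::finite"
  assumes "i \<noteq> m"
  shows "has_pderiv i (monomial_off m \<alpha>)
           (\<lambda>x. real (\<alpha> i) * monomial_off m (\<alpha>(i := \<alpha> i - 1)) x)"
  unfolding has_pderiv_def
proof (intro allI)
  fix x :: "real ^ 'n" and t :: real
  let ?R = "\<Prod>j\<in>UNIV - {m} - {i}. (x $ j) ^ \<alpha> j"
  have "(\<Prod>j\<in>UNIV - {m} - {i}. (x $ j) ^ (\<alpha>(i := \<alpha> i - 1)) j) = ?R"
    by (auto intro!: prod.cong)
  moreover have "((\<lambda>s::real. s ^ \<alpha> i * ?R) has_real_derivative real (\<alpha> i) * t ^ (\<alpha> i - 1) * ?R) (at t)"
    by (intro DERIV_cmult_right) (simp add: DERIV_pow)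
  ultimately show "((\<lambda>s. monomial_off m \<alpha> (vupd x i s)) has_real_derivative
      real (\<alpha> i) * monomial_off m (\<alpha>(i := \<alpha> i - 1)) (vupd x i t)) (at t)"
    using assms by (simp add: monomial_off_vupd mult.assoc)
qed

lemma degree_off_decrement:
  assumes "i \<noteq> m" and "\<alpha> i \<noteq> 0"
  shows "degree_off m (\<alpha>(i := \<alpha> i - 1)) + 1 = degree_off m \<alpha>"
proof -
  have split: "degree_off m \<gamma> = \<gamma> i + (\<Sum>j\<in>UNIV - {m} - {i}. \<gamma> j)" for \<gamma>
    unfolding degree_off_def using assms(1) by (subst sum.remove[of _ i]) auto
  have "(\<Sum>j\<in>UNIV - {m} - {i}. (\<alpha>(i := \<alpha> i - 1)) j) = (\<Sum>j\<in>UNIV - {m} - {i}. \<alpha> j)"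
    by (auto intro!: sum.cong)
  then show ?thesis
    using split[of \<alpha>] split[of "\<alpha>(i := \<alpha> i - 1)"] assms(2) by simp
qed

lemma poly_off_has_pderiv_ex:
  assumes "i \<noteq> m"
  shows "poly_off m d P \<Longrightarrow> \<exists>P'. poly_off m (d - 1) P' \<and> has_pderiv i P P'"
proof (induction rule: poly_off.induct)
  case (poly_off_zero d)
  have "has_pderiv i (\<lambda>x. 0) (\<lambda>x. 0)"
    unfolding has_pderiv_def by simp
  then show ?case by (blast intro: poly_off.intros)
next
  case (poly_off_monomial \<alpha> d c)
  let ?P' = "\<lambda>x. c * (real (\<alpha> i) * monomial_off m (\<alpha>(i := \<alpha> i - 1)) x)"
  have "has_pderiv i (\<lambda>x. c * monomial_off m \<alpha> x) ?P'"
    using monomial_off_has_pderiv[OF assms, of \<alpha>]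
    unfolding has_pderiv_def by (simp add: DERIV_cmult)
  moreover have "poly_off m (d - 1) ?P'"
  proof (cases "\<alpha> i = 0")
    case True
    then show ?thesis by (simp add: poly_off_zero)
  next
    case False
    then have "degree_off m (\<alpha>(i := \<alpha> i - 1)) < d - 1"
      using poly_off_monomial.hyps degree_off_decrement[of i m \<alpha>, OF assms False] by linarith
    then show ?thesis
      using poly_off.poly_off_monomial[of m _ "d - 1" "c * real (\<alpha> i)"] by (simp add: mult.assoc)
  qed
  ultimately show ?case by blast
next
  case (poly_off_add d P R)
  then obtain P' R' where "poly_off m (d - 1) P'" "has_pderiv i P P'"
    and "poly_off m (d - 1) R'" "has_pderiv i R R'"
    by blast
  moreover have "has_pderiv i (\<lambda>x. P x + R x) (\<lambda>x. P' x + R' x)"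
    using \<open>has_pderiv i P P'\<close> \<open>has_pderiv i R R'\<close>
    unfolding has_pderiv_def by (simp add: DERIV_add)
  ultimately show ?case by (blast intro: poly_off.poly_off_add)
qed

lemma poly_off_has_pderiv:
  assumes "i \<noteq> m" and "poly_off m d P"
  shows "has_pderiv i P (pderiv_at i P)"
  using poly_off_has_pderiv_ex[OF assms] pderiv_at_eqI by metis

lemma poly_off_pderiv_at:
  assumes "i \<noteq> m" and "poly_off m d P"
  shows "poly_off m (d - 1) (pderiv_at i P)"
  using poly_off_has_pderiv_ex[OF assms] pderiv_at_eqI by metis

lemma poly_off_lap_minus:
  assumes "poly_off m d P"
  shows "poly_off m (d - 2) (lap_minus m P)"
proof -
  have "poly_off m (d - 2) (pderiv_at i (pderiv_at i P))" if "i \<noteq> m" for i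
  proof -
    have "poly_off m (d - 1 - 1) (pderiv_at i (pderiv_at i P))"
      by (rule poly_off_pderiv_at[OF that poly_off_pderiv_at[OF that assms]])
    then show ?thesis
      by (simp add: numeral_2_eq_2)
  qed
  then have "poly_off m (d - 2) (\<lambda>x. \<Sum>i\<in>UNIV - {m}. pderiv_at i (pderiv_at i P) x)"
    by (intro poly_off_sum) auto
  then show ?thesis
    by (simp add: lap_minus_def[abs_def])
qed

lemma poly_off_lap_minus_pow:
  "poly_off m d P \<Longrightarrow> poly_off m (d - 2 * p) ((lap_minus m ^^ p) P)"
proof (induction p)
  case (Suc p)
  then show ?case
    using poly_off_lap_minus[of m "d - 2 * p"] by (simp add: diff_diff_left)
qed simp

definition primitive :: "real \<Rightarrow> (real \<Rightarrow> real) \<Rightarrow> real \<Rightarrow> real" where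
  "primitive x0 F t = oint x0 t F"

lemma oint_cmult: "oint a b (\<lambda>s. c * F s) = c * oint a b F"
  by (simp add: oint_def)

lemma antider_separated:
  assumes "poly_off m d P"
  shows "antider x0 m (\<lambda>x. P x * F (x $ m)) = (\<lambda>x. P x * primitive x0 F (x $ m))"
proof
  fix x
  show "antider x0 m (\<lambda>x. P x * F (x $ m)) x = P x * primitive x0 F (x $ m)"
    by (simp add: antider_def primitive_def poly_off_vupd_same[OF assms] oint_cmult)
qed

lemma antider_pow_separated:
  assumes "poly_off m d P"
  shows "(antider x0 m ^^ k) (\<lambda>x. P x * F (x $ m)) = (\<lambda>x. P x * (primitive x0 ^^ k) F (x $ m))"
  by (induction k) (simp_all add: antider_separated[OF assms])

lemma has_pderiv_separated_off:
  assumes "i \<noteq> m" and "has_pderiv i P P'"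
  shows "has_pderiv i (\<lambda>x. P x * F (x $ m)) (\<lambda>x. P' x * F (x $ m))"
  using assms(2) by (rule has_pderiv_mult_indep) (use assms(1) in auto)

lemma has_pderiv_separated:
  assumes "poly_off m d P" and "\<And>t. (F has_real_derivative F' t) (at t)"
  shows "has_pderiv m (\<lambda>x. P x * F (x $ m)) (\<lambda>x. P x * F' (x $ m))"
  unfolding has_pderiv_def poly_off_vupd_same[OF assms(1)] vupd_nth if_True simp_thms
  using assms(2) by (blast intro: DERIV_cmult)

lemma lap_minus_separated:
  assumes "poly_off m d P"
  shows "lap_minus m (\<lambda>x. P x * F (x $ m)) = (\<lambda>x. lap_minus m P x * F (x $ m))"
proof -
  have "pderiv_at i (pderiv_at i (\<lambda>x. P x * F (x $ m)))
      = (\<lambda>x. pderiv_at i (pderiv_at i P) x * F (x $ m))" if i: "i \<noteq> m" for i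
  proof -
    have "pderiv_at i (\<lambda>x. P x * F (x $ m)) = (\<lambda>x. pderiv_at i P x * F (x $ m))"
      by (rule pderiv_at_eqI[OF has_pderiv_separated_off[OF i poly_off_has_pderiv[OF i assms]]])
    moreover have "pderiv_at i (\<lambda>x. pderiv_at i P x * F (x $ m))
        = (\<lambda>x. pderiv_at i (pderiv_at i P) x * F (x $ m))"
      by (rule pderiv_at_eqI[OF has_pderiv_separated_off[OF i
            poly_off_has_pderiv[OF i poly_off_pderiv_at[OF i assms]]]])
    ultimately show ?thesis
      by simp
  qed
  then show ?thesis
    by (simp add: lap_minus_def[abs_def] sum_distrib_right)
qed

lemma lap_minus_pow_separated:
  assumes "poly_off m d P"
  shows "(lap_minus m ^^ p) (\<lambda>x. P x * F (x $ m)) = (\<lambda>x. (lap_minus m ^^ p) P x * F (x $ m))"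
proof (induction p)
  case (Suc p)
  then show ?case
    using lap_minus_separated[OF poly_off_lap_minus_pow[OF assms, of p]] by simp
qed simp

lemma primitive_has_real_derivative:
  assumes g: "continuous_on UNIV g"
  shows "(primitive x0 g has_real_derivative g t) (at t)"
proof -
  define a where "a = min x0 t - 1"
  have int: "g integrable_on {u..v}" for u v
    by (intro integrable_continuous_interval continuous_on_subset[OF g]) auto
  have a: "a \<le> x0"
    by (simp add: a_def)
  have eq: "integral {a..s} g - integral {a..x0} g = primitive x0 g s" if "s \<in> {a<..}" for s
  proof (cases "x0 \<le> s")
    case True
    then show ?thesis
      using Henstock_Kurzweil_Integration.integral_combine[OF a True int]
      by (simp add: primitive_def oint_def)
  next
    case False
    then show ?thesis
      using Henstock_Kurzweil_Integration.integral_combine[of a s x0, OF _ _ int] that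
      by (simp add: primitive_def oint_def)
  qed
  have t: "t \<in> {a<..}" "t \<in> interior {a..t + 1}"
    by (auto simp: a_def)
  have "((\<lambda>s. integral {a..s} g) has_real_derivative g t) (at t within {a..t + 1})"
    by (rule integral_has_real_derivative) (auto simp: a_def intro: continuous_on_subset[OF g])
  then have "((\<lambda>s. integral {a..s} g - integral {a..x0} g) has_real_derivative g t) (at t)"
    using at_within_interior[OF t(2)] DERIV_diff[OF _ DERIV_const] by fastforce
  then show ?thesis
    by (rule has_field_derivative_transform_within_open[OF _ open_greaterThan t(1) eq])
qed

lemma continuous_primitive_pow:
  assumes "continuous_on UNIV f"
  shows "continuous_on UNIV ((primitive x0 ^^ k) f)"
proof (induction k)
  case (Suc k)
  then show ?case
    using primitive_has_real_derivative DERIV_isCont continuous_at_imp_continuous_on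
    by (metis funpow.simps(2) o_apply)
qed (simp add: assms)

lemma primitive_pow_has_real_derivative:
  assumes "continuous_on UNIV f"
  shows "((primitive x0 ^^ Suc k) f has_real_derivative (primitive x0 ^^ k) f t) (at t)"
  using primitive_has_real_derivative[OF continuous_primitive_pow[OF assms]] by simp

lemma pderiv_at_pow_separated:
  assumes "poly_off m d P" and "continuous_on UNIV f"
  shows "(pderiv_at m ^^ k) (\<lambda>x. P x * (primitive x0 ^^ (j + k)) f (x $ m))
       = (\<lambda>x. P x * (primitive x0 ^^ j) f (x $ m))"
proof (induction k arbitrary: j)
  case (Suc k)
  have "(pderiv_at m ^^ Suc k) (\<lambda>x. P x * (primitive x0 ^^ (j + Suc k)) f (x $ m))
      = pderiv_at m (\<lambda>x. P x * (primitive x0 ^^ Suc j) f (x $ m))"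
    using Suc.IH[of "Suc j"] by simp
  also have "\<dots> = (\<lambda>x. P x * (primitive x0 ^^ j) f (x $ m))"
    by (intro pderiv_at_eqI has_pderiv_separated[OF assms(1)]
        primitive_pow_has_real_derivative[OF assms(2)])
  finally show ?case .
qed simp

lemma has_pderiv_separated_sum_off:
  assumes "i \<noteq> m" and "\<And>p. p \<in> S \<Longrightarrow> poly_off m d (P p)"
  shows "has_pderiv i (\<lambda>x. \<Sum>p\<in>S. P p x * G p (x $ m))
           (\<lambda>x. \<Sum>p\<in>S. pderiv_at i (P p) x * G p (x $ m))"
  using assms by (intro has_pderiv_sum has_pderiv_separated_off poly_off_has_pderiv)

lemma has_pderiv_separated_sum:
  assumes "\<And>p. p \<in> S \<Longrightarrow> poly_off m d (P p)"
    and "\<And>p t. (G p has_real_derivative G' p t) (at t)"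
  shows "has_pderiv m (\<lambda>x. \<Sum>p\<in>S. P p x * G p (x $ m)) (\<lambda>x. \<Sum>p\<in>S. P p x * G' p (x $ m))"
  using assms by (intro has_pderiv_sum has_pderiv_separated)

lemma separated_sum_has_pderiv2:
  assumes "finite S" and P: "\<And>p. p \<in> S \<Longrightarrow> poly_off m d (P p)"
    and G: "\<And>p t. (G p has_real_derivative G1 p t) (at t)"
    and G1: "\<And>p t. (G1 p has_real_derivative G2 p t) (at t)"
  obtains g1 g2
  where "\<And>i. has_pderiv i (\<lambda>x. \<Sum>p\<in>S. P p x * G p (x $ m)) (g1 i)"
    and "\<And>i. has_pderiv i (g1 i) (g2 i)"
    and "\<And>x. (\<Sum>i\<in>UNIV. g2 i x)
           = (\<Sum>p\<in>S. P p x * G2 p (x $ m) + lap_minus m (P p) x * G p (x $ m))"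
proof
  let ?g1 = "\<lambda>i. if i = m then (\<lambda>x. \<Sum>p\<in>S. P p x * G1 p (x $ m))
                  else (\<lambda>x. \<Sum>p\<in>S. pderiv_at i (P p) x * G p (x $ m))"
  let ?g2 = "\<lambda>i. if i = m then (\<lambda>x. \<Sum>p\<in>S. P p x * G2 p (x $ m))
                  else (\<lambda>x. \<Sum>p\<in>S. pderiv_at i (pderiv_at i (P p)) x * G p (x $ m))"
  show "has_pderiv i (\<lambda>x. \<Sum>p\<in>S. P p x * G p (x $ m)) (?g1 i)" for i
    using has_pderiv_separated_sum[OF P G] has_pderiv_separated_sum_off[OF _ P]
    by (cases "i = m") simp_all
  show "has_pderiv i (?g1 i) (?g2 i)" for i
    using has_pderiv_separated_sum[OF P G1] has_pderiv_separated_sum_off[OF _ poly_off_pderiv_at[OF _ P]]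
    by (cases "i = m") simp_all
  fix x
  have "(\<Sum>i\<in>UNIV. ?g2 i x) = ?g2 m x + (\<Sum>i\<in>UNIV - {m}. ?g2 i x)"
    by (rule sum.remove) auto
  also have "(\<Sum>i\<in>UNIV - {m}. ?g2 i x)
      = (\<Sum>i\<in>UNIV - {m}. \<Sum>p\<in>S. pderiv_at i (pderiv_at i (P p)) x * G p (x $ m))"
    by (rule sum.cong) auto
  also have "\<dots> = (\<Sum>p\<in>S. lap_minus m (P p) x * G p (x $ m))"
    unfolding lap_minus_def sum_distrib_right by (rule sum.swap)
  finally show "(\<Sum>i\<in>UNIV. ?g2 i x)
      = (\<Sum>p\<in>S. P p x * G2 p (x $ m) + lap_minus m (P p) x * G p (x $ m))"
    by (simp add: sum.distrib)
qed

lemma separated_poisson_solution: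
  fixes P :: "real ^ 'n::finite \<Rightarrow> real" and x0 :: real
  assumes P: "poly_off m (2 * lam + 2) P" and f: "continuous_on UNIV f"
    and q: "q = (\<lambda>x. P x * f (x $ m))"
  defines "Q \<equiv> \<lambda>x. \<Sum>p = 0..lam. (-1) ^ p *
             ((pderiv_at m ^^ (2 * lam - 2 * p)) ((lap_minus m ^^ p) ((antider x0 m ^^ (2 * lam + 2)) q))) x"
  shows "Q = (\<lambda>x. \<Sum>p = 0..lam. (-1) ^ p * ((antider x0 m ^^ (2 + 2 * p)) ((lap_minus m ^^ p) q)) x)"
    and "(\<lambda>t. Q (vupd x i t)) differentiable (at (x $ i))"
    and "(\<lambda>t. pderiv_at i Q (vupd x i t)) differentiable (at (x $ i))"
    and "laplacian Q x = q x"
proof -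
  define L where "L p = (lap_minus m ^^ p) P" for p
  define F where "F k = (primitive x0 ^^ k) f" for k
  have L_poly: "poly_off m (2 * lam + 2) (L p)" for p
    unfolding L_def by (rule poly_off_mono[OF poly_off_lap_minus_pow[OF P]]) simp
  have L_vanish: "L (Suc lam) = (\<lambda>x. 0)"
    using poly_off_lap_minus_pow[OF P, of "Suc lam"] by (simp add: L_def poly_off_0_eq_zero)
  have lap_q: "(lap_minus m ^^ p) q = (\<lambda>x. L p x * f (x $ m))" for p
    unfolding q L_def by (rule lap_minus_pow_separated[OF P])
  have "(lap_minus m ^^ p) ((antider x0 m ^^ (2 * lam + 2)) q)
      = (\<lambda>x. L p x * (primitive x0 ^^ (2 * p + 2 + (2 * lam - 2 * p))) f (x $ m))" if "p \<le> lam" for p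
    using that unfolding q antider_pow_separated[OF P] lap_minus_pow_separated[OF P] L_def
    by simp
  then have left: "(pderiv_at m ^^ (2 * lam - 2 * p)) ((lap_minus m ^^ p) ((antider x0 m ^^ (2 * lam + 2)) q))
      = (\<lambda>x. L p x * F (2 * p + 2) (x $ m))" if "p \<le> lam" for p
    using that by (simp only: pderiv_at_pow_separated[OF L_poly f] F_def)
  have right: "(antider x0 m ^^ (2 + 2 * p)) ((lap_minus m ^^ p) q) = (\<lambda>x. L p x * F (2 * p + 2) (x $ m))" for p
    unfolding lap_q antider_pow_separated[OF L_poly] F_def by (simp add: add.commute)
  define G where "G p t = (-1) ^ p * F (2 * p + 2) t" for p t
  define G1 where "G1 p t = (-1) ^ p * F (2 * p + 1) t" for p t
  define G2 where "G2 p t = (-1) ^ p * F (2 * p) t" for p t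
  have Q_sum: "Q = (\<lambda>x. \<Sum>p\<in>{0..lam}. L p x * G p (x $ m))"
    unfolding Q_def G_def using left by (intro ext sum.cong) auto
  show "Q = (\<lambda>x. \<Sum>p = 0..lam. (-1) ^ p * ((antider x0 m ^^ (2 + 2 * p)) ((lap_minus m ^^ p) q)) x)"
    unfolding Q_def right using left by (intro ext sum.cong) auto
  have dF: "(F (Suc k) has_real_derivative F k t) (at t)" for k t
    unfolding F_def by (rule primitive_pow_has_real_derivative[OF f])
  have dG: "(G p has_real_derivative G1 p t) (at t)" for p t
    unfolding G_def G1_def using DERIV_cmult[OF dF[of "2 * p + 1"], of "(-1) ^ p"] by simp
  have dG1: "(G1 p has_real_derivative G2 p t) (at t)" for p t
    unfolding G1_def G2_def using DERIV_cmult[OF dF[of "2 * p"], of "(-1) ^ p"] by simp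
  obtain g1 g2 where g1: "\<And>i. has_pderiv i Q (g1 i)" and g2: "\<And>i. has_pderiv i (g1 i) (g2 i)"
    and lap: "\<And>x. (\<Sum>i\<in>UNIV. g2 i x)
               = (\<Sum>p\<in>{0..lam}. L p x * G2 p (x $ m) + lap_minus m (L p) x * G p (x $ m))"
    unfolding Q_sum
    by (rule separated_sum_has_pderiv2[of "{0..lam}" m "2 * lam + 2" L G G1 G2]) (blast intro: L_poly dG dG1)+
  show "(\<lambda>t. Q (vupd x i t)) differentiable (at (x $ i))"
    by (rule has_pderiv_imp_differentiable[OF g1])
  show "(\<lambda>t. pderiv_at i Q (vupd x i t)) differentiable (at (x $ i))"
    unfolding pderiv_at_eqI[OF g1] by (rule has_pderiv_imp_differentiable[OF g2])
  \<comment> \<open>the x_m-part of term p cancels the lap_minus-part of term p - 1\<close>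
  define b where "b p = (-1) ^ p * L p x * F (2 * p) (x $ m)" for p
  have "laplacian Q x = (\<Sum>p\<le>lam. b p - b (Suc p))"
    unfolding laplacian_eqI[OF g1 g2] lap atLeast0AtMost
    by (intro sum.cong) (simp_all add: b_def G_def G2_def L_def algebra_simps)
  also have "\<dots> = b 0 - b (Suc lam)"
    by (rule sum_telescope)
  also have "\<dots> = q x"
    using L_vanish by (simp add: b_def F_def q L_def)
  finally show "laplacian Q x = q x" .
qed

lemma continuous_on_monomial_factor:
  assumes "continuous_on UNIV q" and "\<And>x. q x = f (x $ m) * monomial_off m \<beta> x"
  shows "continuous_on UNIV f"
proof -
  have "continuous_on UNIV (vupd (\<chi> i. 1) m)"
    unfolding vupd_def
  proof (intro continuous_on_vec_lambda)
    show "continuous_on UNIV (\<lambda>t. if k = m then t else (\<chi> i. 1) $ k)" for k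
      by (cases "k = m") simp_all
  qed
  moreover have "f = (\<lambda>t. q (vupd (\<chi> i. 1) m t))"
    by (simp add: assms(2) monomial_off_def fun_eq_iff)
  ultimately show ?thesis
    using assms(1) by (metis continuous_on_compose2 subset_UNIV)
qed

lemma less_twice_nat_ceiling_half: "B < 2 * nat \<lceil>(real B - 1) / 2\<rceil> + 2"
proof -
  define c where "c = nat \<lceil>(real B - 1) / 2\<rceil>"
  have "(real B - 1) / 2 \<le> real c"
    unfolding c_def by linarith
  then have "real B < real (2 * c + 2)"
    by simp
  then show ?thesis
    unfolding c_def by (simp only: of_nat_less_iff)
qed

theorem corollary5p2:
  fixes q :: "real ^ 'n::finite \<Rightarrow> real" and f :: "real \<Rightarrow> real"
    and m :: 'n and \<beta> :: "'n \<Rightarrow> nat" and x0 :: real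
  assumes C1: "\<exists>D. (\<forall>x. (q has_derivative blinfun_apply (D x)) (at x)) \<and> continuous_on UNIV D"
    and q_form: "\<And>x. q x = f (x $ m) * (\<Prod>i\<in>UNIV - {m}. (x $ i) ^ \<beta> i)"
  shows "let lam = nat \<lceil>(real (\<Sum>i\<in>UNIV - {m}. \<beta> i) - 1) / 2\<rceil>;
             W = (antider x0 m ^^ (2 * lam + 2)) q;
             Q = (\<lambda>x. \<Sum>p = 0..lam. (-1) ^ p *
                    ((pderiv_at m ^^ (2 * lam - 2 * p)) ((lap_minus m ^^ p) W)) x)
         in (\<forall>x. Q x = (\<Sum>p = 0..lam. (-1) ^ p *
                    ((antider x0 m ^^ (2 + 2 * p)) ((lap_minus m ^^ p) q)) x))
          \<and> (\<forall>x i. (\<lambda>t. Q (vupd x i t)) differentiable (at (x $ i))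
                \<and> (\<lambda>t. pderiv_at i Q (vupd x i t)) differentiable (at (x $ i)))
          \<and> (\<forall>x. laplacian Q x = q x)"
proof -
  define lam where "lam = nat \<lceil>(real (\<Sum>i\<in>UNIV - {m}. \<beta> i) - 1) / 2\<rceil>"
  obtain D where "\<And>x. (q has_derivative blinfun_apply (D x)) (at x)"
    using C1 by blast
  then have "continuous_on UNIV q"
    by (intro continuous_at_imp_continuous_on) (blast intro: has_derivative_continuous)
  then have f: "continuous_on UNIV f"
    by (rule continuous_on_monomial_factor) (simp add: q_form monomial_off_def)
  have P: "poly_off m (2 * lam + 2) (\<lambda>x. 1 * monomial_off m \<beta> x)"
    unfolding lam_def degree_off_def[symmetric] by (rule poly_off_monomial less_twice_nat_ceiling_half)+
  have q: "q = (\<lambda>x. 1 * monomial_off m \<beta> x * f (x $ m))"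
    by (simp add: q_form monomial_off_def fun_eq_iff)
  note solution = separated_poisson_solution[OF P f q]
  show ?thesis
    unfolding Let_def lam_def[symmetric]
    using solution(1)[unfolded fun_eq_iff] solution(2-4) by blast
qed

end
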